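(* Let $q\in H^{-1}_{per}(\mathbb{R},\mathbb{R})$ with $\widehat{q}(0)=0$. The point spectrum of the quasi-differential operator $S_{max}(q)$ on $L_2(\mathbb{R})$ is empty.
   Context: $H^{-1}_{per}(\mathbb{R},\mathbb{R})$: real-valued $1$-periodic distributions $q=\sum_{k\in 2\mathbb{Z}}\widehat{q}(k)e^{ik\pi x}$ with $\sum_{k}(1+|k|)^{-2}|\widehat{q}(k)|^2<\infty$, $\widehat{q}(k)=\overline{\widehat{q}(-k)}$. With $\widehat{q}(0)=0$, $Q(x)=\sum_{k\ne0}\frac{\widehat{q}(k)}{ik\pi}e^{ik\pi x}$ (real, $1$-periodic, $Q'=q$). $l_Q[u]:=-(u'-Qu)'-Q(u'-Qu)-Q^2u$; $S_{max}(q)u=l_Q[u]$ on $\{u\in L_2(\mathbb{R}): u,\,u'-Qu\in W^1_{1,loc}(\mathbb{R}),\,l_Q[u]\in L_2(\mathbb{R})\}$. *)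

theory Defs
  imports "HOL-Analysis.Analysis"
begin

text \<open>The data q in H^{-1}_per(R,R) with mean zero, given by its Fourier coefficients
  qhat k (k in 2Z, i.e. qhat vanishes at odd k), together with the associated real
  1-periodic primitive Q (an L2(0,1) function, determined a.e. by its Fourier coefficients
  qhat k / (i k pi) for k nonzero and mean zero).\<close>

definition Hm1_per_mean_zero :: "(int \<Rightarrow> complex) \<Rightarrow> bool" where
  "Hm1_per_mean_zero qhat \<longleftrightarrow>
     (\<forall>k. odd k \<longrightarrow> qhat k = 0) \<and>
     (\<forall>k. qhat k = cnj (qhat (- k))) \<and>
     (\<lambda>k. (cmod (qhat k))\<^sup>2 / (1 + \<bar>real_of_int k\<bar>)\<^sup>2) summable_on UNIV \<and>
     qhat 0 = 0"

definition is_primitive_Q :: "(int \<Rightarrow> complex) \<Rightarrow> (real \<Rightarrow> real) \<Rightarrow> bool" where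
  "is_primitive_Q qhat Q \<longleftrightarrow>
     Q \<in> borel_measurable lborel \<and>
     (\<forall>x. Q (x + 1) = Q x) \<and>
     set_integrable lborel {0..1} (\<lambda>x. (Q x)\<^sup>2) \<and>
     (LBINT x=0..1. Q x) = 0 \<and>
     (\<forall>k. even k \<and> k \<noteq> 0 \<longrightarrow>
        (LBINT x=0..1. complex_of_real (Q x) * exp (- \<i> * of_int k * of_real pi * of_real x))
          = qhat k / (\<i> * of_int k * of_real pi))"

definition W11loc_deriv :: "(real \<Rightarrow> complex) \<Rightarrow> (real \<Rightarrow> complex) \<Rightarrow> bool" where
  "W11loc_deriv f f' \<longleftrightarrow>
     (\<forall>a b. set_integrable lborel {a..b} f') \<and>
     (\<forall>a b. a \<le> b \<longrightarrow> f b - f a = (LBINT x=a..b. f' x))"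

definition L2_fun :: "(real \<Rightarrow> complex) \<Rightarrow> bool" where
  "L2_fun f \<longleftrightarrow> f \<in> borel_measurable lborel \<and> integrable lborel (\<lambda>x. (cmod (f x))\<^sup>2)"

text \<open>Graph of S_max(q): u in the domain and S_max(q) u = f (equality in L2, i.e. a.e.).
  Here d = u', u1 = u' - Q u (the quasi-derivative, an absolutely continuous representative),
  d1 = (u' - Q u)'.\<close>
definition Smax_graph :: "(real \<Rightarrow> real) \<Rightarrow> (real \<Rightarrow> complex) \<Rightarrow> (real \<Rightarrow> complex) \<Rightarrow> bool" where
  "Smax_graph Q u f \<longleftrightarrow>
     L2_fun u \<and>
     (\<exists>d u1 d1.
        W11loc_deriv u d \<and> W11loc_deriv u1 d1 \<and>
        (AE x in lborel. u1 x = d x - of_real (Q x) * u x) \<and>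
        L2_fun (\<lambda>x. - d1 x - of_real (Q x) * u1 x - of_real ((Q x)\<^sup>2) * u x) \<and>
        (AE x in lborel. f x = - d1 x - of_real (Q x) * u1 x - of_real ((Q x)\<^sup>2) * u x))"

definition point_spectrum_Smax :: "(real \<Rightarrow> real) \<Rightarrow> complex set" where
  "point_spectrum_Smax Q =
     {z. \<exists>u. Smax_graph Q u (\<lambda>x. z * u x) \<and> \<not> (AE x in lborel. u x = 0)}"

end

theory Submission
  imports Defs
begin

text \<open>An eigenfunction \<open>u\<close> of \<open>S\<^sub>m\<^sub>a\<^sub>x(q)\<close> with eigenvalue \<open>z\<close>, together with its
  quasi-derivative \<open>u' - Q u\<close>, solves a first-order linear system with 1-periodic, locally
  integrable coefficients, and solutions of that system are determined by their value at a single
  point. Hence the translates \<open>u\<close>, \<open>u(\<cdot> + 1)\<close>, \<open>u(\<cdot> + 2)\<close> are linearly dependent, which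
  produces a Floquet multiplier: \<open>\<phi> = u(\<cdot> + 1) - \<mu> u\<close> satisfies \<open>\<phi>(x + 1) = \<lambda> \<phi>(x)\<close>.
  A continuous function whose square integrals over all intervals are bounded cannot satisfy
  such a relation unless it vanishes, because its mass on \<open>[a + n, a + n + 1]\<close> scales like
  \<open>|\<lambda>|\<^sup>2\<^sup>n\<close>. So \<open>\<phi> = 0\<close>, i.e. \<open>u(x + 1) = \<mu> u(x)\<close>, and the same argument gives \<open>u = 0\<close>.\<close>

lemma has_integral_translate:
  fixes f :: "real \<Rightarrow> 'b::euclidean_space"
  assumes "(f has_integral I) {a..b}"
  shows "((\<lambda>x. f (x + c)) has_integral I) {a - c..b - c}"
  using has_integral_affinity_iff[of 1 f c I a b] assms by simp

lemma integral_translate: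
  fixes f :: "real \<Rightarrow> 'b::euclidean_space"
  assumes "f integrable_on {a + c..b + c}"
  shows "integral {a..b} (\<lambda>x. f (x + c)) = integral {a + c..b + c} f"
  using has_integral_translate[OF integrable_integral[OF assms], of c] by (simp add: integral_unique)

lemma continuous_on_if_has_integral_increments:
  fixes f f' :: "real \<Rightarrow> 'b::euclidean_space"
  assumes "\<And>a b. a \<le> b \<Longrightarrow> (f' has_integral (f b - f a)) {a..b}"
  shows "continuous_on UNIV f"
proof -
  have local: "continuous_on {x - 1..x + 1} f" for x
  proof -
    have "continuous_on {x - 1..x + 1} (\<lambda>y. f (x - 1) + integral {x - 1..y} f')"
      using assms[of "x - 1" "x + 1"] by (intro continuous_intros indefinite_integral_continuous_1) auto
    moreover have "f (x - 1) + integral {x - 1..y} f' = f y" if "y \<in> {x - 1..x + 1}" for y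
      using assms[of "x - 1" y] that by (simp add: integral_unique)
    ultimately show ?thesis
      by (metis (no_types, lifting) continuous_on_cong)
  qed
  have "isCont f x" for x
    by (rule continuous_on_interior[OF local[of x]]) auto
  then show ?thesis
    by (simp add: continuous_at_imp_continuous_on)
qed

definition continuous_L2 :: "(real \<Rightarrow> complex) \<Rightarrow> bool" where
  "continuous_L2 g \<longleftrightarrow>
     continuous_on UNIV g \<and> (\<exists>B. \<forall>a b. integral {a..b} (\<lambda>x. (cmod (g x))\<^sup>2) \<le> B)"

lemma square_norm_integrable_on_interval:
  fixes g :: "real \<Rightarrow> complex"
  assumes "continuous_on UNIV g"
  shows "(\<lambda>x. (cmod (g x))\<^sup>2) integrable_on {a..b}"
  by (rule integrable_continuous_interval, rule continuous_on_subset[of UNIV])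
    (auto intro!: continuous_intros assms)

lemma continuous_L2_translate:
  assumes "continuous_L2 g"
  shows "continuous_L2 (\<lambda>x. g (x + c))"
proof -
  obtain B where B: "\<And>a b. integral {a..b} (\<lambda>x. (cmod (g x))\<^sup>2) \<le> B" and cont: "continuous_on UNIV g"
    using assms unfolding continuous_L2_def by blast
  have "integral {a..b} (\<lambda>x. (cmod (g (x + c)))\<^sup>2) \<le> B" for a b
    using integral_translate[OF square_norm_integrable_on_interval[OF cont], where a=a and b=b and c=c] B[of "a + c" "b + c"]
    by simp
  moreover have "continuous_on UNIV (\<lambda>x. g (x + c))"
    by (intro continuous_on_compose2[OF cont] continuous_intros) auto
  ultimately show ?thesis
    unfolding continuous_L2_def by blast
qed

lemma continuous_L2_reflect:
  assumes "continuous_L2 g"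
  shows "continuous_L2 (\<lambda>x. g (- x))"
proof -
  obtain B where B: "\<And>a b. integral {a..b} (\<lambda>x. (cmod (g x))\<^sup>2) \<le> B" and cont: "continuous_on UNIV g"
    using assms unfolding continuous_L2_def by blast
  have "integral {a..b} (\<lambda>x. (cmod (g (- x)))\<^sup>2) \<le> B" for a b
    using Henstock_Kurzweil_Integration.integral_reflect_real[of "- a" "- b" "\<lambda>x. (cmod (g x))\<^sup>2"] B[of "- b" "- a"] by simp
  moreover have "continuous_on UNIV (\<lambda>x. g (- x))"
    by (intro continuous_on_compose2[OF cont] continuous_intros) auto
  ultimately show ?thesis
    unfolding continuous_L2_def by blast
qed

lemma norm_diff_mult_sq_le:
  fixes a b m :: "'a::real_normed_field"
  shows "(norm (a - m * b))\<^sup>2 \<le> 2 * (norm a)\<^sup>2 + 2 * (norm m)\<^sup>2 * (norm b)\<^sup>2"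
proof -
  have "norm (a - m * b) \<le> norm a + norm m * norm b"
    using norm_triangle_ineq4[of a "m * b"] by (simp add: norm_mult)
  then have "(norm (a - m * b))\<^sup>2 \<le> (norm a + norm m * norm b)\<^sup>2"
    by (simp add: power_mono)
  also have "\<dots> \<le> 2 * (norm a)\<^sup>2 + 2 * (norm m * norm b)\<^sup>2"
    using zero_le_power2[of "norm a - norm m * norm b"] by (simp add: power2_eq_square algebra_simps)
  finally show ?thesis
    by (simp add: power_mult_distrib)
qed

lemma continuous_L2_diff_scaled:
  assumes "continuous_L2 g" "continuous_L2 h"
  shows "continuous_L2 (\<lambda>x. g x - m * h x)"
proof -
  obtain B1 where B1: "\<And>a b. integral {a..b} (\<lambda>x. (cmod (g x))\<^sup>2) \<le> B1" and cg: "continuous_on UNIV g"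
    using assms(1) unfolding continuous_L2_def by blast
  obtain B2 where B2: "\<And>a b. integral {a..b} (\<lambda>x. (cmod (h x))\<^sup>2) \<le> B2" and ch: "continuous_on UNIV h"
    using assms(2) unfolding continuous_L2_def by blast
  have cont: "continuous_on UNIV (\<lambda>x. g x - m * h x)"
    by (intro continuous_intros cg ch)
  have "integral {a..b} (\<lambda>x. (cmod (g x - m * h x))\<^sup>2) \<le> 2 * B1 + 2 * (cmod m)\<^sup>2 * B2" for a b
  proof -
    have ig: "(\<lambda>x. (cmod (g x))\<^sup>2) integrable_on {a..b}" and ih: "(\<lambda>x. (cmod (h x))\<^sup>2) integrable_on {a..b}"
      using cg ch by (simp_all add: square_norm_integrable_on_interval)
    have ig2: "(\<lambda>x. 2 * (cmod (g x))\<^sup>2) integrable_on {a..b}"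
      and ih2: "(\<lambda>x. 2 * (cmod m)\<^sup>2 * (cmod (h x))\<^sup>2) integrable_on {a..b}"
      using integrable_on_cmult_left[OF ig, where c=2] integrable_on_cmult_left[OF ih, where c="2 * (cmod m)\<^sup>2"]
      by simp_all
    have "integral {a..b} (\<lambda>x. (cmod (g x - m * h x))\<^sup>2)
        \<le> integral {a..b} (\<lambda>x. 2 * (cmod (g x))\<^sup>2 + 2 * (cmod m)\<^sup>2 * (cmod (h x))\<^sup>2)"
      using norm_diff_mult_sq_le ig2 ih2 by (intro integral_le square_norm_integrable_on_interval[OF cont] integrable_add) auto
    also have "\<dots> = 2 * integral {a..b} (\<lambda>x. (cmod (g x))\<^sup>2) + 2 * (cmod m)\<^sup>2 * integral {a..b} (\<lambda>x. (cmod (h x))\<^sup>2)"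
      using ig2 ih2 by (simp add: integral_add)
    also have "\<dots> \<le> 2 * B1 + 2 * (cmod m)\<^sup>2 * B2"
      using B1[of a b] B2[of a b] by (intro add_mono mult_left_mono) auto
    finally show ?thesis .
  qed
  with cont show ?thesis
    unfolding continuous_L2_def by blast
qed

lemma unit_integral_nonpos_if_bounded_nondecreasing:
  fixes f :: "real \<Rightarrow> real"
  assumes f_int: "\<And>b c. f integrable_on {b..c}" and bounded: "\<And>b c. integral {b..c} f \<le> B"
    and nondecreasing: "\<And>b. integral {b..b + 1} f \<le> integral {b + 1..b + 2} f"
  shows "integral {a..a + 1} f \<le> 0"
proof (rule ccontr)
  define I where "I b = integral {b..b + 1} f" for b
  assume "\<not> integral {a..a + 1} f \<le> 0"
  then have pos: "0 < I a"
    unfolding I_def by simp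
  have I_grows: "I a \<le> I (a + real n)" for n
  proof (induction n)
    case (Suc n)
    with nondecreasing[of "a + real n"] show ?case
      unfolding I_def by (simp add: ac_simps)
  qed simp
  have mass_grows: "real n * I a \<le> integral {a..a + real n} f" for n
  proof (induction n)
    case (Suc n)
    have "integral {a..a + real n} f + I (a + real n) = integral {a..a + real n + 1} f"
      unfolding I_def by (rule Henstock_Kurzweil_Integration.integral_combine) (auto intro: f_int)
    with Suc I_grows[of n] show ?case
      by (simp add: algebra_simps)
  qed simp
  obtain n :: nat where "B / I a < real n"
    using reals_Archimedean2 by blast
  with pos have "B < real n * I a"
    by (simp add: field_simps)
  with mass_grows[of n] bounded[of a "a + real n"] show False
    by simp
qed

lemma continuous_L2_quasiperiodic_zero_expanding:
  assumes L2: "continuous_L2 g" and quasi: "\<forall>x. g (x + 1) = l * g x" and expanding: "1 \<le> cmod l"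
  shows "g a = 0"
proof -
  obtain B where B: "\<And>a b. integral {a..b} (\<lambda>x. (cmod (g x))\<^sup>2) \<le> B" and cont: "continuous_on UNIV g"
    using L2 unfolding continuous_L2_def by blast
  define f where "f x = (cmod (g x))\<^sup>2" for x
  have f_int: "f integrable_on {b..c}" for b c
    unfolding f_def by (rule square_norm_integrable_on_interval[OF cont])
  have f_nonneg: "f x \<ge> 0" for x
    unfolding f_def by simp
  have "integral {b..b + 1} f \<le> integral {b + 1..b + 2} f" for b
  proof -
    have "integral {b + 1..b + 2} f = integral {b..b + 1} (\<lambda>x. f (x + 1))"
      using integral_translate[OF f_int, where a=b and b="b + 1" and c=1] by (simp add: add_ac)
    also have "\<dots> = integral {b..b + 1} (\<lambda>x. (cmod l)\<^sup>2 * f x)"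
      using quasi by (simp add: f_def norm_mult power_mult_distrib)
    also have "\<dots> = (cmod l)\<^sup>2 * integral {b..b + 1} f"
      by simp
    finally show ?thesis
      using mult_right_mono[OF one_le_power[OF expanding] integral_nonneg[OF f_int f_nonneg]]
      by simp
  qed
  then have "integral {a..a + 1} f \<le> 0"
    using unit_integral_nonpos_if_bounded_nondecreasing[OF f_int] B unfolding f_def by blast
  then have "(f has_integral 0) (cbox a (a + 1))"
    using integrable_integral[OF f_int] integral_nonneg[OF f_int f_nonneg, of a "a + 1"]
    by (metis antisym box_real(2))
  then have "f a = 0"
    by (rule has_integral_0_cbox_imp_0[rotated 2])
      (auto intro: continuous_on_subset[of UNIV] f_nonneg simp: f_def intro!: continuous_intros cont)
  then show ?thesis
    unfolding f_def by simp
qed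

lemma continuous_L2_quasiperiodic_zero:
  assumes L2: "continuous_L2 g" and quasi: "\<forall>x. g (x + 1) = l * g x"
  shows "g a = 0"
proof (cases "1 \<le> cmod l")
  case True
  with continuous_L2_quasiperiodic_zero_expanding[OF L2 quasi] show ?thesis .
next
  case False
  show ?thesis
  proof (cases "l = 0")
    case True
    with quasi[rule_format, of "a - 1"] show ?thesis
      by simp
  next
    case l_nonzero: False
    \<comment> \<open>Reflection turns a contracting multiplier into an expanding one.\<close>
    have "\<forall>y. g (- (y + 1)) = inverse l * g (- y)"
      using quasi l_nonzero by (metis add.commute diff_add_cancel minus_add_distrib
          mult.left_commute mult.right_neutral left_inverse uminus_add_conv_diff)
    moreover have "1 \<le> cmod (inverse l)"
      using False l_nonzero by (simp add: norm_inverse one_le_inverse)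
    ultimately have "g (- (- a)) = 0"
      using continuous_L2_quasiperiodic_zero_expanding[OF continuous_L2_reflect[OF L2]] by blast
    then show ?thesis
      by simp
  qed
qed

text \<open>\<open>U\<close> and \<open>U1\<close> stand for \<open>u\<close> and its quasi-derivative \<open>u' - Q u\<close>; the system
  \<open>U' = U1 + Q U\<close>, \<open>U1' = - Q U1 - (Q\<^sup>2 + z) U\<close> is the equation \<open>l\<^sub>Q[u] = z u\<close>,
  stated in integrated form.\<close>

definition quasi_system :: "(real \<Rightarrow> real) \<Rightarrow> complex \<Rightarrow> (real \<Rightarrow> complex) \<Rightarrow> (real \<Rightarrow> complex) \<Rightarrow> bool" where
  "quasi_system Q z U U1 \<longleftrightarrow> continuous_on UNIV U \<and> continuous_on UNIV U1 \<and>
    (\<forall>a b. a \<le> b \<longrightarrow>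
      ((\<lambda>x. U1 x + of_real (Q x) * U x) has_integral (U b - U a)) {a..b} \<and>
      ((\<lambda>x. - (of_real (Q x) * U1 x) - (of_real ((Q x)\<^sup>2) + z) * U x) has_integral (U1 b - U1 a)) {a..b})"

lemma quasi_system_lincomb:
  assumes "quasi_system Q z U U1" "quasi_system Q z V V1"
  shows "quasi_system Q z (\<lambda>x. p * U x + r * V x) (\<lambda>x. p * U1 x + r * V1 x)"
  unfolding quasi_system_def
proof (intro conjI allI impI)
  show "continuous_on UNIV (\<lambda>x. p * U x + r * V x)" "continuous_on UNIV (\<lambda>x. p * U1 x + r * V1 x)"
    using assms unfolding quasi_system_def by (auto intro!: continuous_intros)
  fix a b :: real
  assume "a \<le> b"
  with assms have U: "((\<lambda>x. U1 x + of_real (Q x) * U x) has_integral (U b - U a)) {a..b}"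
    "((\<lambda>x. - (of_real (Q x) * U1 x) - (of_real ((Q x)\<^sup>2) + z) * U x) has_integral (U1 b - U1 a)) {a..b}"
    and V: "((\<lambda>x. V1 x + of_real (Q x) * V x) has_integral (V b - V a)) {a..b}"
    "((\<lambda>x. - (of_real (Q x) * V1 x) - (of_real ((Q x)\<^sup>2) + z) * V x) has_integral (V1 b - V1 a)) {a..b}"
    unfolding quasi_system_def by blast+
  show "((\<lambda>x. (p * U1 x + r * V1 x) + of_real (Q x) * (p * U x + r * V x))
      has_integral ((p * U b + r * V b) - (p * U a + r * V a))) {a..b}"
    by (rule has_integral_eq_rhs[OF has_integral_eq[OF _ has_integral_add[OF
          has_integral_mult_right[OF U(1), of p] has_integral_mult_right[OF V(1), of r]]]])
      (simp_all add: algebra_simps)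
  show "((\<lambda>x. - (of_real (Q x) * (p * U1 x + r * V1 x)) - (of_real ((Q x)\<^sup>2) + z) * (p * U x + r * V x))
      has_integral ((p * U1 b + r * V1 b) - (p * U1 a + r * V1 a))) {a..b}"
    by (rule has_integral_eq_rhs[OF has_integral_eq[OF _ has_integral_add[OF
          has_integral_mult_right[OF U(2), of p] has_integral_mult_right[OF V(2), of r]]]])
      (simp_all add: algebra_simps)
qed

lemma quasi_system_translate:
  assumes sol: "quasi_system Q z U U1" and periodic: "\<forall>x. Q (x + 1) = Q x"
  shows "quasi_system Q z (\<lambda>x. U (x + 1)) (\<lambda>x. U1 (x + 1))"
  unfolding quasi_system_def
proof (intro conjI allI impI)
  have cont: "continuous_on UNIV U" "continuous_on UNIV U1"
    using sol unfolding quasi_system_def by auto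
  show "continuous_on UNIV (\<lambda>x. U (x + 1))" "continuous_on UNIV (\<lambda>x. U1 (x + 1))"
    by (intro continuous_on_compose2[OF cont(1)] continuous_on_compose2[OF cont(2)] continuous_intros; simp)+
  have Q: "Q (x + 1) = Q x" for x
    using periodic by blast
  fix a b :: real
  assume "a \<le> b"
  with sol have "((\<lambda>x. U1 x + of_real (Q x) * U x) has_integral (U (b + 1) - U (a + 1))) {a + 1..b + 1}"
    "((\<lambda>x. - (of_real (Q x) * U1 x) - (of_real ((Q x)\<^sup>2) + z) * U x) has_integral (U1 (b + 1) - U1 (a + 1))) {a + 1..b + 1}"
    unfolding quasi_system_def by auto
  from this[THEN has_integral_translate, of 1]
  show "((\<lambda>x. U1 (x + 1) + of_real (Q x) * U (x + 1)) has_integral (U (b + 1) - U (a + 1))) {a..b}"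
    "((\<lambda>x. - (of_real (Q x) * U1 (x + 1)) - (of_real ((Q x)\<^sup>2) + z) * U (x + 1)) has_integral (U1 (b + 1) - U1 (a + 1))) {a..b}"
    by (simp_all add: Q)
qed

lemma quasi_system_rhs_bound:
  assumes u: "cmod u \<le> M" and u1: "cmod u1 \<le> M"
  shows "cmod (u1 + of_real q * u) \<le> ((2 + cmod z) + 2 * q\<^sup>2) * M"
    and "cmod (- (of_real q * u1) - (of_real (q\<^sup>2) + z) * u) \<le> ((2 + cmod z) + 2 * q\<^sup>2) * M"
proof -
  have M: "0 \<le> M"
    using u norm_ge_zero order_trans by blast
  have q: "\<bar>q\<bar> \<le> 1 + q\<^sup>2"
    using zero_le_power2[of "\<bar>q\<bar> - 1"] zero_le_power2[of q] by (simp add: power2_eq_square algebra_simps)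
  have Qu: "cmod (of_real q * u) \<le> \<bar>q\<bar> * M" and Qu1: "cmod (of_real q * u1) \<le> \<bar>q\<bar> * M"
    using mult_left_mono[OF u, of "\<bar>q\<bar>"] mult_left_mono[OF u1, of "\<bar>q\<bar>"] by (simp_all add: norm_mult)
  have "cmod (of_real (q\<^sup>2) + z) \<le> q\<^sup>2 + cmod z"
    using norm_triangle_ineq[of "of_real (q\<^sup>2)" z] by (simp add: norm_power)
  then have Q2u: "cmod ((of_real (q\<^sup>2) + z) * u) \<le> (q\<^sup>2 + cmod z) * M"
    unfolding norm_mult using u M by (intro mult_mono) auto
  have "1 + \<bar>q\<bar> \<le> (2 + cmod z) + 2 * q\<^sup>2" "\<bar>q\<bar> + (q\<^sup>2 + cmod z) \<le> (2 + cmod z) + 2 * q\<^sup>2"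
    using q norm_ge_zero[of z] zero_le_power2[of q] by linarith+
  from this[THEN mult_right_mono, OF M]
  have C: "M + \<bar>q\<bar> * M \<le> ((2 + cmod z) + 2 * q\<^sup>2) * M"
    "\<bar>q\<bar> * M + (q\<^sup>2 + cmod z) * M \<le> ((2 + cmod z) + 2 * q\<^sup>2) * M"
    by (simp_all add: ring_distribs)
  show "cmod (u1 + of_real q * u) \<le> ((2 + cmod z) + 2 * q\<^sup>2) * M"
    using norm_triangle_ineq[of u1 "of_real q * u"] u1 Qu C(1) by linarith
  show "cmod (- (of_real q * u1) - (of_real (q\<^sup>2) + z) * u) \<le> ((2 + cmod z) + 2 * q\<^sup>2) * M"
    using norm_triangle_ineq4[of "- (of_real q * u1)" "(of_real (q\<^sup>2) + z) * u"] Qu1 Q2u C(2)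
    by simp
qed

lemma integral_small_near:
  fixes G :: "real \<Rightarrow> real"
  assumes "\<And>a b. G integrable_on {a..b}" "0 < e"
  obtains h where "0 < h" "integral {t - h..t + h} G < e"
proof -
  define F where "F y = integral {t - 1..y} G" for y
  have "continuous_on {t - 1..t + 1} F"
    unfolding F_def by (rule indefinite_integral_continuous_1[OF assms(1)])
  then have "isCont F t"
    by (rule continuous_on_interior) auto
  then obtain d where d: "0 < d" "\<And>y. dist y t < d \<Longrightarrow> dist (F y) (F t) < e / 2"
    using \<open>0 < e\<close> unfolding continuous_at_eps_delta by (meson half_gt_zero)
  define h where "h = min (d / 2) (1 / 2)"
  have h: "0 < h" "h < d" "h \<le> 1 / 2"
    unfolding h_def using d by auto
  have "F (t - h) + integral {t - h..t + h} G = F (t + h)"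
    unfolding F_def by (rule Henstock_Kurzweil_Integration.integral_combine) (use h assms in auto)
  moreover have "dist (F (t + h)) (F t) < e / 2" "dist (F (t - h)) (F t) < e / 2"
    using d(2)[of "t + h"] d(2)[of "t - h"] h by (auto simp: dist_real_def)
  ultimately have "integral {t - h..t + h} G < e"
    unfolding dist_real_def by linarith
  with h show thesis
    using that by blast
qed

lemma const_plus_twice_sq_integrable_on:
  fixes Q :: "real \<Rightarrow> real"
  assumes "\<And>a b. (\<lambda>x. (Q x)\<^sup>2) integrable_on {a..b}"
  shows "(\<lambda>x. c + 2 * (Q x)\<^sup>2) integrable_on {a..b}"
  using integrable_on_cmult_left[OF assms, where c=2]
  by (intro integrable_add integrable_const_ivl) simp

lemma quasi_system_increment_bound:
  assumes sol: "quasi_system Q z U U1" and Q_int: "\<And>a b. (\<lambda>x. (Q x)\<^sup>2) integrable_on {a..b}"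
    and "lo \<le> hi" and bound: "\<And>y. y \<in> {lo..hi} \<Longrightarrow> cmod (U y) \<le> M \<and> cmod (U1 y) \<le> M"
  shows "cmod (U hi - U lo) \<le> integral {lo..hi} (\<lambda>x. ((2 + cmod z) + 2 * (Q x)\<^sup>2) * M)"
    and "cmod (U1 hi - U1 lo) \<le> integral {lo..hi} (\<lambda>x. ((2 + cmod z) + 2 * (Q x)\<^sup>2) * M)"
proof -
  from integrable_on_cmult_right[OF const_plus_twice_sq_integrable_on[OF Q_int, where c="2 + cmod z"], of M]
  have G_int: "(\<lambda>x. ((2 + cmod z) + 2 * (Q x)\<^sup>2) * M) integrable_on {lo..hi}"
    by simp
  from sol \<open>lo \<le> hi\<close> have U: "((\<lambda>x. U1 x + of_real (Q x) * U x) has_integral (U hi - U lo)) {lo..hi}"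
    and U1: "((\<lambda>x. - (of_real (Q x) * U1 x) - (of_real ((Q x)\<^sup>2) + z) * U x)
        has_integral (U1 hi - U1 lo)) {lo..hi}"
    unfolding quasi_system_def by blast+
  show "cmod (U hi - U lo) \<le> integral {lo..hi} (\<lambda>x. ((2 + cmod z) + 2 * (Q x)\<^sup>2) * M)"
    unfolding integral_unique[OF U, symmetric] using bound quasi_system_rhs_bound(1)
    by (intro integral_norm_bound_integral has_integral_integrable[OF U] G_int) auto
  show "cmod (U1 hi - U1 lo) \<le> integral {lo..hi} (\<lambda>x. ((2 + cmod z) + 2 * (Q x)\<^sup>2) * M)"
    unfolding integral_unique[OF U1, symmetric] using bound quasi_system_rhs_bound(2)
    by (intro integral_norm_bound_integral has_integral_integrable[OF U1] G_int) auto
qed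

lemma quasi_system_zero_near:
  assumes sol: "quasi_system Q z U U1" and Q_int: "\<And>a b. (\<lambda>x. (Q x)\<^sup>2) integrable_on {a..b}"
    and zero: "U t = 0" "U1 t = 0"
  obtains h where "0 < h" "\<And>y. y \<in> {t - h..t + h} \<Longrightarrow> U y = 0 \<and> U1 y = 0"
proof -
  define G where "G x = (2 + cmod z) + 2 * (Q x)\<^sup>2" for x
  have G_int: "G integrable_on {a..b}" for a b
    unfolding G_def by (rule const_plus_twice_sq_integrable_on[OF Q_int])
  obtain h where h: "0 < h" "integral {t - h..t + h} G < 1 / 2"
    using integral_small_near[OF G_int] by (metis half_gt_zero zero_less_one)
  define K where "K = {t - h..t + h}"
  have cont: "continuous_on UNIV U" "continuous_on UNIV U1"
    using sol unfolding quasi_system_def by auto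
  define m where "m y = max (cmod (U y)) (cmod (U1 y))" for y
  have "continuous_on K m"
    unfolding m_def by (intro continuous_intros continuous_on_subset[OF cont(1)] continuous_on_subset[OF cont(2)]) auto
  then obtain x0 where x0: "x0 \<in> K" "\<And>y. y \<in> K \<Longrightarrow> m y \<le> m x0"
    using continuous_attains_sup[of K m] h(1) unfolding K_def by fastforce
  define M where "M = m x0"
  have bound: "cmod (U y) \<le> M \<and> cmod (U1 y) \<le> M" if "y \<in> K" for y
    using x0(2)[OF that] unfolding M_def m_def by auto
  have M: "0 \<le> M"
    using bound[OF x0(1)] norm_ge_zero order_trans by blast
  \<comment> \<open>On the short interval \<open>K\<close> the integrated system halves the maximum \<open>M\<close>, forcing \<open>M = 0\<close>.\<close>
  have increment: "cmod (U hi - U lo) \<le> M / 2 \<and> cmod (U1 hi - U1 lo) \<le> M / 2"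
    if "lo \<in> K" "hi \<in> K" "lo \<le> hi" for lo hi
  proof -
    have "{lo..hi} \<subseteq> K"
      using that unfolding K_def by auto
    then have "integral {lo..hi} (\<lambda>x. G x * M) \<le> integral K (\<lambda>x. G x * M)"
      using M G_int integrable_on_cmult_right[OF G_int]
      unfolding K_def by (intro integral_subset_le) (auto simp: G_def)
    also have "\<dots> \<le> M / 2"
      using mult_right_mono[OF less_imp_le[OF h(2)] M] unfolding K_def by simp
    finally show ?thesis
      using quasi_system_increment_bound[OF sol Q_int \<open>lo \<le> hi\<close>, of M] bound \<open>{lo..hi} \<subseteq> K\<close>
      unfolding G_def by (meson order_trans subsetD)
  qed
  have "t \<in> K"
    unfolding K_def using h(1) by auto
  have "cmod (U y) \<le> M / 2 \<and> cmod (U1 y) \<le> M / 2" if "y \<in> K" for y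
    using increment[OF that \<open>t \<in> K\<close>] increment[OF \<open>t \<in> K\<close> that] zero
    by (cases "y \<le> t") (auto simp: norm_minus_commute)
  from this[OF x0(1)] have "M = 0"
    using M unfolding M_def m_def by (simp add: max_def split: if_splits)
  with bound have "U y = 0 \<and> U1 y = 0" if "y \<in> K" for y
    using that by force
  with h(1) show thesis
    using that unfolding K_def by blast
qed

lemma quasi_system_unique:
  assumes sol: "quasi_system Q z U U1" and Q_int: "\<And>a b. (\<lambda>x. (Q x)\<^sup>2) integrable_on {a..b}"
    and zero: "U t = 0" "U1 t = 0"
  shows "U x = 0 \<and> U1 x = 0"
proof -
  define Z where "Z = {x. U x = 0 \<and> U1 x = 0}"
  have "continuous_on UNIV U" "continuous_on UNIV U1"
    using sol unfolding quasi_system_def by auto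
  then have "closed Z"
    unfolding Z_def by (intro closed_Collect_conj closed_Collect_eq continuous_on_const)
  moreover have "open Z"
    unfolding open_contains_ball
  proof
    fix s
    assume "s \<in> Z"
    then obtain h where "0 < h" "\<And>y. y \<in> {s - h..s + h} \<Longrightarrow> U y = 0 \<and> U1 y = 0"
      using quasi_system_zero_near[OF sol Q_int] unfolding Z_def by blast
    then show "\<exists>e>0. ball s e \<subseteq> Z"
      unfolding Z_def by (intro exI[of _ h]) (auto simp: dist_real_def abs_less_iff)
  qed
  moreover have "t \<in> Z"
    using zero unfolding Z_def by simp
  ultimately have "Z = UNIV"
    using clopen by blast
  then show ?thesis
    unfolding Z_def by auto
qed

lemma W11loc_deriv_has_integral:
  assumes "W11loc_deriv f f'" "a \<le> b"
  shows "(f' has_integral (f b - f a)) {a..b}"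
proof -
  have int: "set_integrable lborel {a..b} f'" and eq: "f b - f a = (LBINT x=a..b. f' x)"
    using assms unfolding W11loc_deriv_def by auto
  have "f b - f a = integral {a..b} f'"
    using eq interval_integral_Icc[OF assms(2), of f'] set_borel_integral_eq_integral(2)[OF int] by simp
  then show ?thesis
    using set_borel_integral_eq_integral(1)[OF int] integrable_integral by metis
qed

lemma AE_lborel_obtain_negligible:
  assumes "AE x in lborel. P x"
  obtains N where "negligible N" "\<And>x. x \<notin> N \<Longrightarrow> P x"
proof -
  from AE_completion[OF assms] obtain N where "negligible N" "{x. \<not> P x} \<subseteq> N"
    unfolding eventually_ae_filter_negligible by blast
  with that show ?thesis
    by blast
qed

lemma periodic_integrable_on:
  fixes f :: "real \<Rightarrow> 'b::euclidean_space"
  assumes periodic: "\<forall>x. f (x + 1) = f x" and int01: "f integrable_on {0..1}"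
  shows "f integrable_on {a..b}"
proof -
  have step: "f integrable_on {of_int k - c..of_int k + 1 - c}"
    if "f integrable_on {of_int k..of_int k + 1}" "c = 1 \<or> c = -1" for k c
  proof -
    have "f (x + c) = f x" for x
      using \<open>c = 1 \<or> c = -1\<close> periodic[rule_format, of "x - 1"] periodic by auto
    with has_integral_translate[OF integrable_integral[OF that(1)], of c] show ?thesis
      by auto
  qed
  have unit: "f integrable_on {of_int k..of_int k + 1}" for k
  proof (induction k rule: int_induct[where k=0])
    case base
    with int01 show ?case by simp
  next
    case (step1 i)
    with step[OF step1(2), of "-1"] show ?case by (simp add: algebra_simps)
  next
    case (step2 i)
    with step[OF step2(2), of 1] show ?case by (simp add: algebra_simps)
  qed
  have symmetric: "f integrable_on {- real n..real n}" for n :: nat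
  proof (induction n)
    case 0
    show ?case
      using integrable_on_subinterval[OF unit[of 0], of 0 0] by simp
  next
    case (Suc n)
    have left: "f integrable_on {- real (Suc n)..- real n}"
      using unit[of "- int (Suc n)"] by simp
    have right: "f integrable_on {real n..real (Suc n)}"
      using unit[of "int n"] by (simp add: add.commute)
    have "f integrable_on {- real (Suc n)..real n}"
      by (rule Henstock_Kurzweil_Integration.integrable_combine[OF _ _ left Suc]) auto
    from Henstock_Kurzweil_Integration.integrable_combine[OF _ _ this right] show ?case
      by simp
  qed
  have "{a..b} \<subseteq> {- real (nat \<lceil>max \<bar>a\<bar> \<bar>b\<bar>\<rceil>)..real (nat \<lceil>max \<bar>a\<bar> \<bar>b\<bar>\<rceil>)}"
    by auto linarith+
  with symmetric show ?thesis
    using integrable_on_subinterval by blast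
qed

lemma Smax_graph_eigenfunction:
  assumes "Smax_graph Q u (\<lambda>x. z * u x)"
  obtains u1 where "quasi_system Q z u u1" "continuous_L2 u"
proof -
  from assms obtain d u1 d1 where L2: "L2_fun u" and u: "W11loc_deriv u d" and u1: "W11loc_deriv u1 d1"
    and quasi_deriv: "AE x in lborel. u1 x = d x - of_real (Q x) * u x"
    and eigen: "AE x in lborel. z * u x = - d1 x - of_real (Q x) * u1 x - of_real ((Q x)\<^sup>2) * u x"
    unfolding Smax_graph_def by blast
  obtain N1 where N1: "negligible N1" "\<And>x. x \<notin> N1 \<Longrightarrow> u1 x = d x - of_real (Q x) * u x"
    using AE_lborel_obtain_negligible[OF quasi_deriv] by blast
  obtain N2 where N2: "negligible N2"
    "\<And>x. x \<notin> N2 \<Longrightarrow> z * u x = - d1 x - of_real (Q x) * u1 x - of_real ((Q x)\<^sup>2) * u x"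
    using AE_lborel_obtain_negligible[OF eigen] by blast
  have du: "\<And>a b. a \<le> b \<Longrightarrow> (d has_integral (u b - u a)) {a..b}"
    and du1: "\<And>a b. a \<le> b \<Longrightarrow> (d1 has_integral (u1 b - u1 a)) {a..b}"
    using W11loc_deriv_has_integral[OF u] W11loc_deriv_has_integral[OF u1] by blast+
  have cont: "continuous_on UNIV u" "continuous_on UNIV u1"
    by (rule continuous_on_if_has_integral_increments[where f'=d], rule du, assumption)
      (rule continuous_on_if_has_integral_increments[where f'=d1], rule du1, assumption)
  have "quasi_system Q z u u1"
    unfolding quasi_system_def
  proof (intro conjI allI impI cont)
    fix a b :: real
    assume "a \<le> b"
    show "((\<lambda>x. u1 x + of_real (Q x) * u x) has_integral (u b - u a)) {a..b}"
      using N1(2) by (intro has_integral_spike[OF N1(1) _ du[OF \<open>a \<le> b\<close>]]) simp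
    show "((\<lambda>x. - (of_real (Q x) * u1 x) - (of_real ((Q x)\<^sup>2) + z) * u x) has_integral (u1 b - u1 a)) {a..b}"
    proof (rule has_integral_spike[OF N2(1) _ du1[OF \<open>a \<le> b\<close>]])
      fix x
      assume "x \<in> {a..b} - N2"
      then have "z * u x = - d1 x - of_real (Q x) * u1 x - of_real ((Q x)\<^sup>2) * u x"
        using N2(2) by blast
      then show "- (of_real (Q x) * u1 x) - (of_real ((Q x)\<^sup>2) + z) * u x = d1 x"
        by algebra
    qed
  qed
  moreover have "continuous_L2 u"
  proof -
    have "(\<lambda>x. (cmod (u x))\<^sup>2) integrable_on UNIV"
      using L2 unfolding L2_fun_def by (blast intro: integrable_on_lborel)
    then have "integral {a..b} (\<lambda>x. (cmod (u x))\<^sup>2) \<le> integral UNIV (\<lambda>x. (cmod (u x))\<^sup>2)" for a b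
      using square_norm_integrable_on_interval[OF cont(1)] by (intro integral_subset_le) auto
    with cont show ?thesis
      unfolding continuous_L2_def by blast
  qed
  ultimately show thesis
    using that by blast
qed

lemma linear_recurrence_factor:
  fixes a b c :: complex
  assumes "c \<noteq> 0"
  shows "\<exists>lam mu. \<forall>U V W. a * U + b * V + c * W = 0 \<longrightarrow> W - mu * V = lam * (V - mu * U)"
proof -
  define s where "s = csqrt (b\<^sup>2 - 4 * a * c)"
  define lam mu where "lam = (- b + s) / (2 * c)" and "mu = (- b - s) / (2 * c)"
  have "s\<^sup>2 = b\<^sup>2 - 4 * a * c"
    unfolding s_def by (rule power2_csqrt)
  then have "(- b + s) * (- b - s) = 4 * a * c"
    by (simp add: power2_eq_square algebra_simps)
  with assms have roots: "c * (lam + mu) = - b" "c * (lam * mu) = a"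
    unfolding lam_def mu_def by (simp_all add: field_simps)
  have "W - mu * V = lam * (V - mu * U)" if "a * U + b * V + c * W = 0" for U V W
  proof -
    have "c * (W - mu * V - lam * (V - mu * U)) = c * W - c * (lam + mu) * V + c * (lam * mu) * U"
      by (simp add: algebra_simps)
    also have "\<dots> = a * U + b * V + c * W"
      using roots by simp
    finally show ?thesis
      using that assms by simp
  qed
  then show ?thesis
    by blast
qed

lemma det2_zero_imp_proportional:
  fixes u u1 v v1 :: complex
  assumes "u * v1 - u1 * v = 0" "u \<noteq> 0 \<or> u1 \<noteq> 0"
  obtains r where "v = r * u" "v1 = r * u1"
proof (cases "u = 0")
  case True
  with assms show thesis
    using that[of "v1 / u1"] by auto
next
  case False
  with assms show thesis
    using that[of "v / u"] by (auto simp: field_simps)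
qed

lemma quasi_system_Floquet:
  assumes sol: "quasi_system Q z u u1" and periodic: "\<forall>x. Q (x + 1) = Q x"
    and Q_int: "\<And>a b. (\<lambda>x. (Q x)\<^sup>2) integrable_on {a..b}"
  obtains mu lam where "\<And>x. u (x + 2) - mu * u (x + 1) = lam * (u (x + 1) - mu * u x)"
proof -
  define v v1 w w1 where "v x = u (x + 1)" and "v1 x = u1 (x + 1)"
    and "w x = u (x + 2)" and "w1 x = u1 (x + 2)" for x
  have sol_v: "quasi_system Q z v v1"
    unfolding v_def v1_def by (rule quasi_system_translate[OF sol periodic])
  have sol_w: "quasi_system Q z w w1"
    using quasi_system_translate[OF sol_v periodic] unfolding v_def v1_def w_def w1_def
    by (simp add: add.assoc)
  have vanish: "\<forall>x. U x = 0" if "quasi_system Q z U U1" "U 0 = 0" "U1 0 = 0" for U U1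
    using quasi_system_unique[OF that(1) Q_int that(2,3)] by blast
  consider (trivial) "u 0 = 0" "u1 0 = 0"
    | (dependent) "u 0 \<noteq> 0 \<or> u1 0 \<noteq> 0" "u 0 * v1 0 - u1 0 * v 0 = 0"
    | (independent) "u 0 * v1 0 - u1 0 * v 0 \<noteq> 0"
    by blast
  then show thesis
  proof cases
    case trivial
    with vanish[OF sol] have "\<forall>x. u x = 0"
      by blast
    then show thesis
      using that[of 0 0] by simp
  next
    case dependent
    then obtain r where "v 0 = r * u 0" "v1 0 = r * u1 0"
      using det2_zero_imp_proportional by blast
    then have "\<forall>x. 1 * v x + (- r) * u x = 0"
      by (intro vanish[OF quasi_system_lincomb[OF sol_v sol]]) simp_all
    then have "\<forall>x. u (x + 1) = r * u x"
      unfolding v_def by (simp add: algebra_simps)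
    then have "u (x + 1 + 1) = r * u (x + 1)" for x
      by blast
    then have "u (x + 2) - r * u (x + 1) = 0 * (u (x + 1) - r * u x)" for x
      by (simp add: add.assoc)
    then show thesis
      by (rule that)
  next
    case independent
    \<comment> \<open>\<open>a u + b v + c w\<close> has zero initial data (a determinant with a repeated row), so it vanishes.\<close>
    define a b c where "a = v 0 * w1 0 - v1 0 * w 0" and "b = w 0 * u1 0 - w1 0 * u 0"
      and "c = u 0 * v1 0 - u1 0 * v 0"
    have relation: "\<forall>x. 1 * (a * u x + b * v x) + c * w x = 0"
      by (intro vanish[OF quasi_system_lincomb[OF quasi_system_lincomb[OF sol sol_v] sol_w]])
        (simp_all add: a_def b_def c_def algebra_simps)
    from independent have "c \<noteq> 0"
      unfolding c_def .
    then obtain lam mu where "\<forall>U V W. a * U + b * V + c * W = 0 \<longrightarrow> W - mu * V = lam * (V - mu * U)"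
      using linear_recurrence_factor by blast
    with relation have "w x - mu * v x = lam * (v x - mu * u x)" for x
      by simp
    then show thesis
      using that unfolding v_def w_def by blast
  qed
qed

theorem proposition3p9:
  fixes qhat :: "int \<Rightarrow> complex" and Q :: "real \<Rightarrow> real"
  assumes "Hm1_per_mean_zero qhat"
    and "is_primitive_Q qhat Q"
  shows "point_spectrum_Smax Q = {}"
proof -
  from assms(2) have periodic: "\<forall>x. Q (x + 1) = Q x"
    and Q_L2: "set_integrable lborel {0..1} (\<lambda>x. (Q x)\<^sup>2)"
    unfolding is_primitive_Q_def by auto
  have Q_int: "(\<lambda>x. (Q x)\<^sup>2) integrable_on {a..b}" for a b
    using periodic_integrable_on[OF _ set_borel_integral_eq_integral(1)[OF Q_L2]] periodic by simp
  have "u t = 0" if eigen: "Smax_graph Q u (\<lambda>x. z * u x)" for z u t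
  proof -
    obtain u1 where sol: "quasi_system Q z u u1" and L2: "continuous_L2 u"
      using Smax_graph_eigenfunction[OF eigen] .
    obtain mu lam where Floquet: "\<And>x. u (x + 2) - mu * u (x + 1) = lam * (u (x + 1) - mu * u x)"
      using quasi_system_Floquet[OF sol periodic Q_int] by blast
    define \<phi> where "\<phi> x = u (x + 1) - mu * u x" for x
    have "continuous_L2 \<phi>"
      unfolding \<phi>_def by (intro continuous_L2_diff_scaled continuous_L2_translate L2)
    moreover have "\<forall>x. \<phi> (x + 1) = lam * \<phi> x"
      using Floquet unfolding \<phi>_def by (simp add: add.assoc)
    ultimately have "\<phi> x = 0" for x
      by (rule continuous_L2_quasiperiodic_zero)
    then have "\<forall>x. u (x + 1) = mu * u x"
      unfolding \<phi>_def by simp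
    with L2 show "u t = 0"
      by (rule continuous_L2_quasiperiodic_zero)
  qed
  then show ?thesis
    unfolding point_spectrum_Smax_def by simp
qed

end
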